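(* Let $d\ge1$ and for $k=1,2$ let $(\boldsymbol X_k,Y_k)=(X_{k,1},\ldots,X_{k,d},Y_k)$ be a random vector with continuous marginals and $(d+1)$-dimensional copula $C_k$. Fix $\boldsymbol{\alpha}\in[0,1)^d$ with $C_k(\boldsymbol\alpha,1)<1$, and set $l_{\boldsymbol\alpha}(v)=\dfrac{v-C_1(\boldsymbol\alpha,v)}{v-C_2(\boldsymbol\alpha,v)}$. Suppose at least one of $C_1,C_2$ is $\mathrm{LTD}^1_{d+1}$. If $Y_1\le_{\rm disp}Y_2$ and $l_{\boldsymbol\alpha}(v)\ge l_{\boldsymbol\alpha}(1)$ for all $v\in(0,1]$, then $$\Delta\mathrm{VCoES}_{\boldsymbol\alpha,\beta}(Y_1|\boldsymbol X_1)\le\Delta\mathrm{VCoES}_{\boldsymbol\alpha,\beta}(Y_2|\boldsymbol X_2)\quad\text{for all }\beta\in(0,1).$$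
   Context: $C(\boldsymbol{\alpha},v)=C(\alpha_1,\ldots,\alpha_d,v)$. $F^{-1}(t)=\inf\{x:F(x)\ge t\}$, $\mathrm{VaR}_t(Z)=F_Z^{-1}(t)$, $\mathrm{ES}_\beta(Z)=\frac1{1-\beta}\int_\beta^1\mathrm{VaR}_t(Z)\,dt$. $\mathrm{VCoVaR}_{\boldsymbol\alpha,t}(Y_k|\boldsymbol X_k)$ is the $t$-quantile of the conditional distribution of $Y_k$ given $\{\exists\, i: X_{k,i}>\mathrm{VaR}_{\alpha_i}(X_{k,i})\}$; $\mathrm{VCoES}_{\boldsymbol\alpha,\beta}(Y|\boldsymbol X)=\frac1{1-\beta}\int_\beta^1\mathrm{VCoVaR}_{\boldsymbol\alpha,t}(Y|\boldsymbol X)\,dt$ and $\Delta\mathrm{VCoES}_{\boldsymbol\alpha,\beta}(Y|\boldsymbol X)=\mathrm{VCoES}_{\boldsymbol\alpha,\beta}(Y|\boldsymbol X)-\mathrm{ES}_\beta(Y)$. A $(d+1)$-dimensional copula $C$ is $\mathrm{LTD}^1_{d+1}$ if $C(u_1,\ldots,u_d,v)/v$ is nonincreasing in $v\in(0,1]$ for all $u_1,\ldots,u_d$. $Y_1\le_{\rm disp}Y_2$ if $F_{Y_1}^{-1}(v)-F_{Y_1}^{-1}(u)\le F_{Y_2}^{-1}(v)-F_{Y_2}^{-1}(u)$ for all $0<u\le v<1$. *)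

theory Defs
  imports "HOL-Probability.Probability"
begin

definition dfun :: "'a measure \<Rightarrow> ('a \<Rightarrow> real) \<Rightarrow> real \<Rightarrow> real" where
  "dfun M Z x = measure M {\<omega> \<in> space M. Z \<omega> \<le> x}"

text \<open>Generalised inverse F^{-1}(t) = inf {x. F x \<ge> t}, valued in the extended reals
  (it is -\<infinity> for t \<le> 0 when F is a distribution function).\<close>
definition gen_inv :: "(real \<Rightarrow> real) \<Rightarrow> real \<Rightarrow> ereal" where
  "gen_inv F t = Inf (ereal ` {x. t \<le> F x})"

text \<open>VaR_t(Z) = F_Z^{-1}(t) (finite for t in (0,1)).\<close>
definition VaR :: "'a measure \<Rightarrow> ('a \<Rightarrow> real) \<Rightarrow> real \<Rightarrow> real" where
  "VaR M Z t = real_of_ereal (gen_inv (dfun M Z) t)"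

definition ES :: "'a measure \<Rightarrow> ('a \<Rightarrow> real) \<Rightarrow> real \<Rightarrow> real" where
  "ES M Z \<beta> = 1 / (1 - \<beta>) * (LINT t:{\<beta><..<1}|lborel. VaR M Z t)"

text \<open>Stress event: some component X_i exceeds its VaR at level alpha_i
  (VaR_0 = -\<infinity>, so alpha_i = 0 gives the sure event).\<close>
definition stress_event :: "'a measure \<Rightarrow> ('a \<Rightarrow> real^'d) \<Rightarrow> real^'d \<Rightarrow> 'a set" where
  "stress_event M X \<alpha> =
     {\<omega> \<in> space M. \<exists>i. ereal (X \<omega> $ i) > gen_inv (dfun M (\<lambda>\<eta>. X \<eta> $ i)) (\<alpha> $ i)}"

definition cond_dfun :: "'a measure \<Rightarrow> ('a \<Rightarrow> real^'d) \<Rightarrow> ('a \<Rightarrow> real) \<Rightarrow> real^'d \<Rightarrow> real \<Rightarrow> real" where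
  "cond_dfun M X Y \<alpha> y =
     measure M ({\<omega> \<in> space M. Y \<omega> \<le> y} \<inter> stress_event M X \<alpha>) / measure M (stress_event M X \<alpha>)"

definition VCoVaR :: "'a measure \<Rightarrow> ('a \<Rightarrow> real^'d) \<Rightarrow> ('a \<Rightarrow> real) \<Rightarrow> real^'d \<Rightarrow> real \<Rightarrow> real" where
  "VCoVaR M X Y \<alpha> t = real_of_ereal (gen_inv (cond_dfun M X Y \<alpha>) t)"

definition VCoES :: "'a measure \<Rightarrow> ('a \<Rightarrow> real^'d) \<Rightarrow> ('a \<Rightarrow> real) \<Rightarrow> real^'d \<Rightarrow> real \<Rightarrow> real" where
  "VCoES M X Y \<alpha> \<beta> = 1 / (1 - \<beta>) * (LINT t:{\<beta><..<1}|lborel. VCoVaR M X Y \<alpha> t)"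

definition Delta_VCoES :: "'a measure \<Rightarrow> ('a \<Rightarrow> real^'d) \<Rightarrow> ('a \<Rightarrow> real) \<Rightarrow> real^'d \<Rightarrow> real \<Rightarrow> real" where
  "Delta_VCoES M X Y \<alpha> \<beta> = VCoES M X Y \<alpha> \<beta> - ES M Y \<beta>"

definition is_copula :: "(real^'d \<Rightarrow> real \<Rightarrow> real) \<Rightarrow> bool" where
  "is_copula C \<longleftrightarrow> (\<exists>N :: ((real^'d) \<times> real) measure.
      prob_space N \<and> sets N = sets borel \<and>
      (\<forall>i. \<forall>a\<in>{0..1}. measure N {p. fst p $ i \<le> a} = a) \<and>
      (\<forall>a\<in>{0..1}. measure N {p. snd p \<le> a} = a) \<and>
      (\<forall>u v. (\<forall>i. u $ i \<in> {0..1}) \<and> v \<in> {0..1} \<longrightarrow>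
         C u v = measure N {p. (\<forall>i. fst p $ i \<le> u $ i) \<and> snd p \<le> v}))"

definition is_copula_of :: "'a measure \<Rightarrow> ('a \<Rightarrow> real^'d) \<Rightarrow> ('a \<Rightarrow> real) \<Rightarrow> (real^'d \<Rightarrow> real \<Rightarrow> real) \<Rightarrow> bool" where
  "is_copula_of M X Y C \<longleftrightarrow> is_copula C \<and>
     (\<forall>x y. measure M {\<omega> \<in> space M. (\<forall>i. X \<omega> $ i \<le> x $ i) \<and> Y \<omega> \<le> y}
            = C (\<chi> i. dfun M (\<lambda>\<omega>. X \<omega> $ i) (x $ i)) (dfun M Y y))"

definition cont_marginals :: "'a measure \<Rightarrow> ('a \<Rightarrow> real^'d) \<Rightarrow> ('a \<Rightarrow> real) \<Rightarrow> bool" where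
  "cont_marginals M X Y \<longleftrightarrow>
     (\<forall>i. continuous_on UNIV (dfun M (\<lambda>\<omega>. X \<omega> $ i))) \<and> continuous_on UNIV (dfun M Y)"

definition LTD1 :: "(real^'d \<Rightarrow> real \<Rightarrow> real) \<Rightarrow> bool" where
  "LTD1 C \<longleftrightarrow> (\<forall>u. (\<forall>i. u $ i \<in> {0..1}) \<longrightarrow>
      (\<forall>v w. 0 < v \<and> v \<le> w \<and> w \<le> 1 \<longrightarrow> C u w / w \<le> C u v / v))"

definition disp_le :: "'a measure \<Rightarrow> ('a \<Rightarrow> real) \<Rightarrow> 'b measure \<Rightarrow> ('b \<Rightarrow> real) \<Rightarrow> bool" where
  "disp_le M1 Y1 M2 Y2 \<longleftrightarrow> (\<forall>u v. 0 < u \<and> u \<le> v \<and> v < 1 \<longrightarrow>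
      VaR M1 Y1 v - VaR M1 Y1 u \<le> VaR M2 Y2 v - VaR M2 Y2 u)"

end

(* Given the stress event E = {exists i. X_i > VaR_alpha_i(X_i)}, of probability 1 - C(alpha,1),
   the distribution function of Y is h(F_Y) with h(v) = (v - C(alpha,v)) / (1 - C(alpha,1)), so
   VCoVaR_t = VaR_s(t)(Y) at the level s(t) = min {v. h(v) >= t}.  The hypothesis on l_alpha says
   exactly h_2 <= h_1, hence s_1(t) <= s_2(t); an LTD copula has h(v) <= v, hence s(t) >= t, and
   either way t <= s_2(t).  If t <= s_1(t), the dispersive order and monotonicity of VaR give
   VaR_s1(Y_1) - VaR_t(Y_1) <= VaR_s1(Y_2) - VaR_t(Y_2) <= VaR_s2(Y_2) - VaR_t(Y_2); otherwise the
   left difference is <= 0 <= the right one.  Averaging this pointwise bound over t in (beta,1)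
   gives the claim. *)

theory Submission
  imports Defs
begin

lemma dfun_eq_cdf_distr:
  assumes "prob_space M" "Y \<in> borel_measurable M"
  shows "dfun M Y = cdf (distr M borel Y)"
proof
  fix x
  have "cdf (distr M borel Y) x = measure M (Y -` {..x} \<inter> space M)"
    using assms(2) by (simp add: cdf_def measure_distr)
  also have "Y -` {..x} \<inter> space M = {\<omega> \<in> space M. Y \<omega> \<le> x}" by auto
  finally show "dfun M Y x = cdf (distr M borel Y) x" unfolding dfun_def by simp
qed

lemma dfun_nonneg: "0 \<le> dfun M Y y"
  by (simp add: dfun_def)

lemma dfun_le_1: "prob_space M \<Longrightarrow> dfun M Y y \<le> 1"
  by (simp add: dfun_def prob_space.prob_le_1)

lemma dfun_tendsto_1:
  assumes "prob_space M" "Y \<in> borel_measurable M"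
  shows "(dfun M Y \<longlongrightarrow> 1) at_top"
proof -
  interpret prob_space M by fact
  interpret D: real_distribution "distr M borel Y" using assms(2) by simp
  show ?thesis using dfun_eq_cdf_distr[OF assms] D.cdf_lim_at_top_prob by simp
qed

lemma
  assumes "prob_space M" "Y \<in> borel_measurable M" "0 < t" "t < 1"
  shows gen_inv_dfun_eq_VaR: "gen_inv (dfun M Y) t = ereal (VaR M Y t)"
    and VaR_eq_Inf: "VaR M Y t = Inf {x. t \<le> dfun M Y x}"
    and le_dfun_iff_VaR_le: "t \<le> dfun M Y x \<longleftrightarrow> VaR M Y t \<le> x"
proof -
  interpret prob_space M by fact
  interpret D: cdf_distribution "distr M borel Y"
    unfolding cdf_distribution_def using assms(2) by simp
  have F: "dfun M Y = D.C" using dfun_eq_cdf_distr[OF assms(1,2)] .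
  have galois: "t \<le> D.C x \<longleftrightarrow> D.I t \<le> x" for x
    using D.pseudoinverse[OF assms(3,4)] .
  have bdd: "bdd_below {x. t \<le> D.C x}"
    using galois by (intro bdd_belowI[of _ "D.I t"]) blast
  have ne: "{x. t \<le> D.C x} \<noteq> {}" using galois[of "D.I t"] by blast
  have gen_inv: "gen_inv (dfun M Y) t = ereal (D.I t)"
    unfolding gen_inv_def F using ereal_Inf'[OF bdd ne] by (simp add: image_image)
  then have VaR: "VaR M Y t = D.I t" by (simp add: VaR_def)
  show "gen_inv (dfun M Y) t = ereal (VaR M Y t)" using gen_inv VaR by simp
  show "VaR M Y t = Inf {x. t \<le> dfun M Y x}" using VaR F by simp
  show "t \<le> dfun M Y x \<longleftrightarrow> VaR M Y t \<le> x" unfolding VaR F by (rule galois)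
qed

lemma VaR_mono:
  assumes "prob_space M" "Y \<in> borel_measurable M" "0 < s" "s \<le> t" "t < 1"
  shows "VaR M Y s \<le> VaR M Y t"
proof -
  have "t \<le> dfun M Y (VaR M Y t)" using le_dfun_iff_VaR_le[OF assms(1,2)] assms by simp
  then have "s \<le> dfun M Y (VaR M Y t)" using assms(4) by linarith
  then show ?thesis using le_dfun_iff_VaR_le[OF assms(1,2)] assms by simp
qed

lemma dfun_VaR:
  assumes "prob_space M" "Y \<in> borel_measurable M" "continuous_on UNIV (dfun M Y)"
    and "0 < t" "t < 1"
  shows "dfun M Y (VaR M Y t) = t"
proof (rule antisym)
  note galois = le_dfun_iff_VaR_le[OF assms(1,2,4,5)]
  show "t \<le> dfun M Y (VaR M Y t)" using galois by simp
  have "(dfun M Y \<longlongrightarrow> dfun M Y (VaR M Y t)) (at_left (VaR M Y t))"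
    using assms(3) by (simp add: continuous_on_eq_continuous_at isCont_def filterlim_at_split)
  moreover have "eventually (\<lambda>x. dfun M Y x \<le> t) (at_left (VaR M Y t))"
  proof (rule eventually_at_leftI[of "VaR M Y t - 1"])
    fix x assume "x \<in> {VaR M Y t - 1<..<VaR M Y t}"
    then show "dfun M Y x \<le> t" using galois[of x] by auto
  qed simp
  ultimately show "dfun M Y (VaR M Y t) \<le> t"
    by (intro tendsto_upperbound) (auto simp: trivial_limit_at_left_real)
qed

lemma set_integrable_VaR:
  assumes "prob_space M" "Y \<in> borel_measurable M" "integrable M Y"
  shows "set_integrable lborel {0<..<1} (VaR M Y)"
proof -
  interpret prob_space M by fact
  interpret D: cdf_distribution "distr M borel Y"
    unfolding cdf_distribution_def using assms(2) by simp
  let ?U = "restrict_space lborel {0<..<1::real}"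
  have I_measurable: "D.I \<in> measurable ?U borel"
    using D.measurable_CI by (simp add: measurable_cong_sets sets_restrict_space)
  have "integrable (distr M borel Y) (\<lambda>x. x)"
    using assms(2,3) by (subst integrable_distr_eq) auto
  then have "integrable (distr ?U borel D.I) (\<lambda>x. x)"
    by (simp add: D.distr_I_eq_M)
  then have "integrable ?U D.I"
    using I_measurable by (subst (asm) integrable_distr_eq) auto
  moreover have "D.I t = VaR M Y t" if "t \<in> space ?U" for t
    using that VaR_eq_Inf[OF assms(1,2)] dfun_eq_cdf_distr[OF assms(1,2)]
    by (simp add: space_restrict_space)
  ultimately have "integrable ?U (VaR M Y)"
    using Bochner_Integration.integrable_cong[of ?U ?U D.I "VaR M Y"] by simp
  then show ?thesis
    unfolding set_integrable_def by (subst (asm) integrable_restrict_space) auto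
qed

lemma integrable_uniform_measure:
  fixes Y :: "'a \<Rightarrow> real"
  assumes "finite_measure M" "E \<in> sets M" "emeasure M E \<noteq> 0" "integrable M Y"
  shows "integrable (uniform_measure M E) Y"
proof (rule integrableI_bounded)
  have [measurable]: "Y \<in> borel_measurable M" using assms(4) by simp
  then show "Y \<in> borel_measurable (uniform_measure M E)" by simp
  have "(\<integral>\<^sup>+x. norm (Y x) \<partial>uniform_measure M E)
      = (\<integral>\<^sup>+x. ennreal (norm (Y x)) * indicator E x \<partial>M) / emeasure M E"
    using assms(2) by (intro nn_integral_uniform_measure) auto
  also have "\<dots> \<le> (\<integral>\<^sup>+x. norm (Y x) \<partial>M) / emeasure M E"
    by (intro divide_right_mono_ennreal nn_integral_mono) (auto split: split_indicator)
  also have "\<dots> < \<infinity>"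
    using assms(3,4) unfolding integrable_iff_bounded infinity_ennreal_def less_top[symmetric]
    by (auto simp: ennreal_divide_eq_top_iff)
  finally show "(\<integral>\<^sup>+x. norm (Y x) \<partial>uniform_measure M E) < \<infinity>" .
qed

lemma sets_borel_lower_halfspaces:
  "{p :: (real^'d) \<times> real. fst p $ i \<le> a} \<in> sets borel"
  "{p :: (real^'d) \<times> real. snd p \<le> a} \<in> sets borel"
  "{p :: (real^'d) \<times> real. (\<forall>i. fst p $ i \<le> u $ i) \<and> snd p \<le> a} \<in> sets borel"
  by (intro borel_closed closed_Collect_conj closed_Collect_all closed_Collect_le
      continuous_intros)+

lemma
  fixes C :: "real^'d \<Rightarrow> real \<Rightarrow> real"
  assumes "is_copula C" "\<forall>i. u $ i \<in> {0..1}"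
  shows copula_mono_right: "0 \<le> v \<Longrightarrow> v \<le> w \<Longrightarrow> w \<le> 1 \<Longrightarrow> C u v \<le> C u w"
    and copula_diff_right_le: "0 \<le> v \<Longrightarrow> v \<le> w \<Longrightarrow> w \<le> 1 \<Longrightarrow> C u w - C u v \<le> w - v"
    and copula_zero_right: "C u 0 = 0"
    and copula_eq_0_if_coord_0: "u $ j = 0 \<Longrightarrow> v \<in> {0..1} \<Longrightarrow> C u v = 0"
proof -
  obtain N :: "((real^'d) \<times> real) measure" where N: "prob_space N" "sets N = sets borel"
    "\<forall>i. \<forall>a\<in>{0..1}. measure N {p. fst p $ i \<le> a} = a"
    "\<forall>a\<in>{0..1}. measure N {p. snd p \<le> a} = a"
    "\<forall>v\<in>{0..1}. C u v = measure N {p. (\<forall>i. fst p $ i \<le> u $ i) \<and> snd p \<le> v}"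
    using assms unfolding is_copula_def by blast
  interpret N: prob_space N by (rule N(1))
  define A where "A v = {p :: (real^'d) \<times> real. (\<forall>i. fst p $ i \<le> u $ i) \<and> snd p \<le> v}" for v
  define S where "S v = {p :: (real^'d) \<times> real. snd p \<le> v}" for v
  have [simp]: "A v \<in> sets N" "S v \<in> sets N" "{p. fst p $ i \<le> a} \<in> sets N" for v i a
    unfolding A_def S_def N(2) by (rule sets_borel_lower_halfspaces)+
  have C_eq: "C u v = measure N (A v)" if "v \<in> {0..1}" for v
    using N(5) that by (simp add: A_def)
  have S_eq: "measure N (S v) = v" if "v \<in> {0..1}" for v
    using N(4) that by (simp add: S_def)
  show "C u v \<le> C u w" and "C u w - C u v \<le> w - v" if "0 \<le> v" "v \<le> w" "w \<le> 1" for v w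
  proof -
    have "A v \<subseteq> A w" "S v \<subseteq> S w" using that(2) by (auto simp: A_def S_def)
    then show "C u v \<le> C u w" using that by (simp add: C_eq N.finite_measure_mono)
    have "C u w - C u v = measure N (A w - A v)"
      using \<open>A v \<subseteq> A w\<close> that by (simp add: C_eq N.finite_measure_Diff)
    also have "\<dots> \<le> measure N (S w - S v)"
      by (rule N.finite_measure_mono)
         (auto simp: A_def S_def N(2) sets_borel_lower_halfspaces sets.Diff)
    also have "\<dots> = w - v"
      using \<open>S v \<subseteq> S w\<close> that by (simp add: N.finite_measure_Diff S_eq)
    finally show "C u w - C u v \<le> w - v" .
  qed
  have "A 0 \<subseteq> S 0" by (auto simp: A_def S_def)
  then have "C u 0 \<le> measure N (S 0)" by (simp add: C_eq N.finite_measure_mono)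
  then show "C u 0 = 0" using S_eq[of 0] C_eq[of 0] by (simp add: antisym)
  show "C u v = 0" if "u $ j = 0" "v \<in> {0..1}" for v
  proof -
    have "C u v \<le> measure N {p. fst p $ j \<le> 0}"
      using that by (auto simp: C_eq A_def intro!: N.finite_measure_mono, metis)
    also have "\<dots> = 0" using N(3) by simp
    finally show ?thesis using that(2) by (simp add: C_eq antisym)
  qed
qed

lemma continuous_on_copula_right:
  fixes C :: "real^'d \<Rightarrow> real \<Rightarrow> real"
  assumes "is_copula C" "\<forall>i. u $ i \<in> {0..1}"
  shows "continuous_on {0..1} (C u)"
proof (rule lipschitz_on_continuous_on)
  have bound: "\<bar>C u w - C u v\<bar> \<le> w - v" if "0 \<le> v" "v \<le> w" "w \<le> 1" for v w
    using copula_mono_right[OF assms that] copula_diff_right_le[OF assms that] by simp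
  show "1-lipschitz_on {0..1} (C u)"
  proof (rule lipschitz_onI)
    fix v w :: real assume "v \<in> {0..1}" "w \<in> {0..1}"
    then show "dist (C u v) (C u w) \<le> 1 * dist v w"
      using bound[of v w] bound[of w v]
      by (cases "v \<le> w") (simp_all add: dist_real_def abs_minus_commute)
  qed simp
qed

definition unit_quantile :: "(real \<Rightarrow> real) \<Rightarrow> real \<Rightarrow> real" where
  "unit_quantile G t = Inf {v \<in> {0..1}. t \<le> G v}"

lemma unit_quantile_le: "v \<in> {0..1} \<Longrightarrow> t \<le> G v \<Longrightarrow> unit_quantile G t \<le> v"
  unfolding unit_quantile_def by (rule cInf_lower) (auto intro: bdd_belowI[of _ 0])

context
  fixes G :: "real \<Rightarrow> real"
  assumes G_cont: "continuous_on {0..1} G" and G_mono: "mono_on {0..1} G"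
    and G_0: "G 0 = 0" and G_1: "G 1 = 1"
begin

lemma
  assumes "0 < t" "t < 1"
  shows unit_quantile_bounds: "unit_quantile G t \<in> {0<..<1}"
    and le_G_unit_quantile: "t \<le> G (unit_quantile G t)"
proof -
  define T where "T = {v \<in> {0..1}. t \<le> G v}"
  have "closed T"
    using continuous_closed_preimage[OF G_cont closed_atLeastAtMost closed_atLeast, of t]
    unfolding T_def by (simp add: vimage_def Int_def)
  moreover have "T \<noteq> {}" "bdd_below T"
    using assms G_1 by (auto simp: T_def intro!: exI[of _ 1] bdd_belowI[of _ 0])
  ultimately have "unit_quantile G t \<in> T"
    unfolding unit_quantile_def T_def[symmetric] by (rule closed_contains_Inf[rotated -1])
  then have s: "unit_quantile G t \<in> {0..1}" "t \<le> G (unit_quantile G t)" by (auto simp: T_def)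
  then show "t \<le> G (unit_quantile G t)" by simp
  obtain x where "x \<in> {0..1}" "G x = t"
    using IVT'[of G 0 t 1, OF _ _ _ G_cont] G_0 G_1 assms by auto
  moreover have "x \<noteq> 1" using \<open>G x = t\<close> G_1 assms(2) by auto
  ultimately have "unit_quantile G t < 1" using unit_quantile_le[of x t G] by auto
  moreover have "unit_quantile G t \<noteq> 0" using s(2) G_0 assms(1) by auto
  ultimately show "unit_quantile G t \<in> {0<..<1}" using s(1) by auto
qed

lemma le_G_iff_unit_quantile_le:
  assumes "0 < t" "t < 1" "u \<in> {0..1}"
  shows "t \<le> G u \<longleftrightarrow> unit_quantile G t \<le> u"
proof
  show "t \<le> G u \<Longrightarrow> unit_quantile G t \<le> u" using assms(3) by (rule unit_quantile_le)
  assume "unit_quantile G t \<le> u"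
  then have "G (unit_quantile G t) \<le> G u"
    using unit_quantile_bounds[OF assms(1,2)] assms(3) by (intro mono_onD[OF G_mono]) auto
  then show "t \<le> G u" using le_G_unit_quantile[OF assms(1,2)] by linarith
qed

end

text \<open>If the copula C is the distribution of (U,V), then stress_dist C \<alpha> is the distribution
  function of V conditional on the stress event that some U_i exceeds \<alpha>_i.\<close>
definition stress_dist :: "(real^'d \<Rightarrow> real \<Rightarrow> real) \<Rightarrow> real^'d \<Rightarrow> real \<Rightarrow> real" where
  "stress_dist C \<alpha> v = (v - C \<alpha> v) / (1 - C \<alpha> 1)"

lemma
  fixes C :: "real^'d \<Rightarrow> real \<Rightarrow> real"
  assumes "is_copula C" "\<forall>i. \<alpha> $ i \<in> {0..1}" "C \<alpha> 1 < 1"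
  shows continuous_on_stress_dist: "continuous_on {0..1} (stress_dist C \<alpha>)"
    and mono_on_stress_dist: "mono_on {0..1} (stress_dist C \<alpha>)"
    and stress_dist_0: "stress_dist C \<alpha> 0 = 0"
    and stress_dist_1: "stress_dist C \<alpha> 1 = 1"
proof -
  show "continuous_on {0..1} (stress_dist C \<alpha>)"
    unfolding stress_dist_def using continuous_on_copula_right[OF assms(1,2)]
    by (intro continuous_intros) (use assms(3) in auto)
  show "mono_on {0..1} (stress_dist C \<alpha>)"
  proof (rule mono_onI)
    fix v w :: real assume "v \<in> {0..1}" "w \<in> {0..1}" "v \<le> w"
    then have "v - C \<alpha> v \<le> w - C \<alpha> w" using copula_diff_right_le[OF assms(1,2), of v w] by simp
    then show "stress_dist C \<alpha> v \<le> stress_dist C \<alpha> w"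
      using assms(3) by (simp add: stress_dist_def divide_right_mono)
  qed
  show "stress_dist C \<alpha> 0 = 0" by (simp add: stress_dist_def copula_zero_right[OF assms(1,2)])
  show "stress_dist C \<alpha> 1 = 1" using assms(3) by (simp add: stress_dist_def)
qed

lemma stress_dist_le_self_if_LTD1:
  fixes C :: "real^'d \<Rightarrow> real \<Rightarrow> real"
  assumes "LTD1 C" "\<forall>i. \<alpha> $ i \<in> {0..1}" "C \<alpha> 1 < 1" "0 < v" "v \<le> 1"
  shows "stress_dist C \<alpha> v \<le> v"
proof -
  have "C \<alpha> 1 / 1 \<le> C \<alpha> v / v" using assms(1,2,4,5) unfolding LTD1_def by blast
  then have "v * C \<alpha> 1 \<le> C \<alpha> v" using assms(4) by (simp add: le_divide_eq mult.commute)
  then show ?thesis using assms(3) by (simp add: stress_dist_def divide_le_eq algebra_simps)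
qed

lemma stress_dist_le_if_ratio_ge:
  fixes C1 C2 :: "real^'d \<Rightarrow> real \<Rightarrow> real"
  assumes "is_copula C1" "\<forall>i. \<alpha> $ i \<in> {0..1}" "C1 \<alpha> 1 < 1" "C2 \<alpha> 1 < 1" "v \<in> {0..1}"
    and "(1 - C1 \<alpha> 1) / (1 - C2 \<alpha> 1) \<le> (v - C1 \<alpha> v) / (v - C2 \<alpha> v)"
  shows "stress_dist C2 \<alpha> v \<le> stress_dist C1 \<alpha> v"
proof -
  have "C1 \<alpha> v - C1 \<alpha> 0 \<le> v - 0"
    using copula_diff_right_le[OF assms(1,2), of 0 v] assms(5) by simp
  then have "0 \<le> v - C1 \<alpha> v" using copula_zero_right[OF assms(1,2)] by simp
  moreover have "0 < (1 - C1 \<alpha> 1) / (1 - C2 \<alpha> 1)" using assms(3,4) by simp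
  moreover have "0 < (v - C1 \<alpha> v) / (v - C2 \<alpha> v)"
    using assms(6) \<open>0 < (1 - C1 \<alpha> 1) / (1 - C2 \<alpha> 1)\<close> by linarith
  ultimately have "0 < v - C2 \<alpha> v" by (auto simp: zero_less_divide_iff)
  then show ?thesis
    using assms(3,4,6) by (simp add: stress_dist_def field_simps)
qed

locale copula_model =
  fixes M :: "'a measure" and X :: "'a \<Rightarrow> real^'d" and Y :: "'a \<Rightarrow> real"
    and C :: "real^'d \<Rightarrow> real \<Rightarrow> real" and \<alpha> :: "real^'d"
  assumes M_prob_space: "prob_space M"
    and X_measurable: "X \<in> borel_measurable M"
    and Y_measurable[measurable]: "Y \<in> borel_measurable M"
    and marginals_continuous: "cont_marginals M X Y"
    and copula_of: "is_copula_of M X Y C"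
    and levels: "\<forall>i. \<alpha> $ i \<in> {0..<1}"
    and stress_possible: "C \<alpha> 1 < 1"
begin

sublocale prob_space M by (rule M_prob_space)

lemma copula: "is_copula C"
  using copula_of by (simp add: is_copula_of_def)

lemma levels_unit: "\<forall>i. \<alpha> $ i \<in> {0..1}"
  using levels by (metis atLeastAtMost_iff atLeastLessThan_iff less_imp_le)

lemma X_coord_measurable[measurable]: "(\<lambda>\<omega>. X \<omega> $ i) \<in> borel_measurable M"
  by (rule measurable_compose[OF X_measurable])
     (intro borel_measurable_continuous_onI continuous_intros)

lemma dfun_X_coord_unit: "\<forall>j. (\<chi> i. dfun M (\<lambda>\<omega>. X \<omega> $ i) (x $ i)) $ j \<in> {0..1}"
  by (simp add: dfun_nonneg dfun_le_1[OF M_prob_space])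

lemma measure_lower_orthant:
  "measure M {\<omega> \<in> space M. (\<forall>i. X \<omega> $ i \<le> x $ i) \<and> Y \<omega> \<le> y}
     = C (\<chi> i. dfun M (\<lambda>\<omega>. X \<omega> $ i) (x $ i)) (dfun M Y y)"
  using copula_of unfolding is_copula_of_def by blast

lemma measure_X_lower_orthant:
  "measure M {\<omega> \<in> space M. \<forall>i. X \<omega> $ i \<le> x $ i} = C (\<chi> i. dfun M (\<lambda>\<omega>. X \<omega> $ i) (x $ i)) 1"
proof -
  define u where "u = (\<chi> i. dfun M (\<lambda>\<omega>. X \<omega> $ i) (x $ i))"
  define A where "A n = {\<omega> \<in> space M. (\<forall>i. X \<omega> $ i \<le> x $ i) \<and> Y \<omega> \<le> real n}" for n
  have "(\<lambda>n. measure M (A n)) \<longlonglongrightarrow> measure M (\<Union>n. A n)"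
  proof (rule finite_Lim_measure_incseq)
    show "range A \<subseteq> sets M" unfolding A_def by (intro image_subsetI) measurable
    show "incseq A" by (rule incseq_SucI) (auto simp: A_def)
  qed
  moreover have "(\<Union>n. A n) = {\<omega> \<in> space M. \<forall>i. X \<omega> $ i \<le> x $ i}"
    by (auto simp: A_def intro: real_arch_simple)
  moreover have "(\<lambda>n. measure M (A n)) \<longlonglongrightarrow> C u 1"
  proof -
    have F_lim: "(\<lambda>n. dfun M Y (real n)) \<longlonglongrightarrow> 1"
      using dfun_tendsto_1[OF M_prob_space Y_measurable] filterlim_real_sequentially
      by (rule filterlim_compose)
    have C_cont: "continuous_on {0..1} (C u)"
      unfolding u_def by (rule continuous_on_copula_right[OF copula dfun_X_coord_unit])
    have "(\<lambda>n. C u (dfun M Y (real n))) \<longlonglongrightarrow> C u 1"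
      by (rule continuous_on_tendsto_compose[OF C_cont F_lim])
         (simp_all add: dfun_nonneg dfun_le_1[OF M_prob_space])
    then show ?thesis by (simp add: A_def u_def measure_lower_orthant)
  qed
  ultimately show ?thesis by (simp add: u_def LIMSEQ_unique)
qed

lemma dfun_X_coord_VaR:
  assumes "\<forall>i. 0 < \<alpha> $ i"
  shows "(\<chi> i. dfun M (\<lambda>\<omega>. X \<omega> $ i) (VaR M (\<lambda>\<omega>. X \<omega> $ i) (\<alpha> $ i))) = \<alpha>"
proof -
  have "dfun M (\<lambda>\<omega>. X \<omega> $ i) (VaR M (\<lambda>\<omega>. X \<omega> $ i) (\<alpha> $ i)) = \<alpha> $ i" for i
    using marginals_continuous assms levels unfolding cont_marginals_def
    by (intro dfun_VaR[OF M_prob_space X_coord_measurable]) auto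
  then show ?thesis by (simp add: vec_eq_iff)
qed

text \<open>The complement of the stress event is the orthant below the VaR vector of X; it is
  empty if some level \<alpha>_i is 0, since VaR_0 = -\<infinity>.\<close>
lemma stress_event_complement:
  obtains K where "K \<in> sets M" "stress_event M X \<alpha> = space M - K"
    and "\<And>y. measure M (K \<inter> {\<omega> \<in> space M. Y \<omega> \<le> y}) = C \<alpha> (dfun M Y y)"
    and "measure M K = C \<alpha> 1"
proof (cases "\<exists>j. \<alpha> $ j = 0")
  case True
  then obtain j where j: "\<alpha> $ j = 0" by blast
  have "gen_inv (dfun M (\<lambda>\<omega>. X \<omega> $ j)) (\<alpha> $ j) = -\<infinity>"
    unfolding gen_inv_def j by (rule ereal_bot, rule Inf_lower) (simp add: dfun_nonneg)
  then have "stress_event M X \<alpha> = space M - {}"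
    unfolding stress_event_def by (auto intro!: exI[of _ j])
  moreover have "C \<alpha> v = 0" if "v \<in> {0..1}" for v
    using copula_eq_0_if_coord_0[OF copula levels_unit j that] .
  ultimately show thesis
    by (intro that[of "{}"]) (auto simp: dfun_nonneg dfun_le_1[OF M_prob_space])
next
  case False
  then have pos: "\<forall>i. 0 < \<alpha> $ i" using levels by (metis atLeastLessThan_iff order_le_less)
  define m where "m = (\<chi> i. VaR M (\<lambda>\<omega>. X \<omega> $ i) (\<alpha> $ i))"
  define K where "K = {\<omega> \<in> space M. \<forall>i. X \<omega> $ i \<le> m $ i}"
  show thesis
  proof (rule that[of K])
    show "K \<in> sets M" unfolding K_def by measurable
    have "gen_inv (dfun M (\<lambda>\<omega>. X \<omega> $ i)) (\<alpha> $ i) = ereal (m $ i)" for i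
    proof -
      have "0 < \<alpha> $ i" "\<alpha> $ i < 1" using pos levels by auto
      then show ?thesis
        unfolding m_def vec_lambda_beta
        by (rule gen_inv_dfun_eq_VaR[OF M_prob_space X_coord_measurable])
    qed
    then have "stress_event M X \<alpha> = {\<omega> \<in> space M. \<exists>i. m $ i < X \<omega> $ i}"
      by (simp add: stress_event_def)
    also have "\<dots> = space M - K"
      by (auto simp: K_def not_le[symmetric])
    finally show "stress_event M X \<alpha> = space M - K" .
    have \<alpha>_eq: "(\<chi> i. dfun M (\<lambda>\<omega>. X \<omega> $ i) (m $ i)) = \<alpha>"
      unfolding m_def vec_lambda_beta by (rule dfun_X_coord_VaR[OF pos])
    have "K \<inter> {\<omega> \<in> space M. Y \<omega> \<le> y} = {\<omega> \<in> space M. (\<forall>i. X \<omega> $ i \<le> m $ i) \<and> Y \<omega> \<le> y}" for y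
      by (auto simp: K_def)
    then show "measure M (K \<inter> {\<omega> \<in> space M. Y \<omega> \<le> y}) = C \<alpha> (dfun M Y y)" for y
      using measure_lower_orthant[of m y] by (simp only: \<alpha>_eq)
    show "measure M K = C \<alpha> 1"
      using measure_X_lower_orthant[of m] unfolding K_def by (simp only: \<alpha>_eq)
  qed
qed

lemma
  shows sets_stress_event: "stress_event M X \<alpha> \<in> sets M"
    and measure_stress_event: "measure M (stress_event M X \<alpha>) = 1 - C \<alpha> 1"
    and measure_le_Int_stress_event:
      "measure M ({\<omega> \<in> space M. Y \<omega> \<le> y} \<inter> stress_event M X \<alpha>) = dfun M Y y - C \<alpha> (dfun M Y y)"
proof -
  obtain K where K: "K \<in> sets M" "stress_event M X \<alpha> = space M - K"
    "\<And>y. measure M (K \<inter> {\<omega> \<in> space M. Y \<omega> \<le> y}) = C \<alpha> (dfun M Y y)"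
    "measure M K = C \<alpha> 1"
    by (rule stress_event_complement) blast
  show "stress_event M X \<alpha> \<in> sets M" using K(1,2) by simp
  show "measure M (stress_event M X \<alpha>) = 1 - C \<alpha> 1" using K(1,2,4) by (simp add: prob_compl)
  have "{\<omega> \<in> space M. Y \<omega> \<le> y} \<inter> stress_event M X \<alpha>
      = {\<omega> \<in> space M. Y \<omega> \<le> y} - K \<inter> {\<omega> \<in> space M. Y \<omega> \<le> y}"
    using K(2) by auto
  then show "measure M ({\<omega> \<in> space M. Y \<omega> \<le> y} \<inter> stress_event M X \<alpha>)
      = dfun M Y y - C \<alpha> (dfun M Y y)"
    using K(1,3) by (simp add: finite_measure_Diff dfun_def sets.Int)
qed

lemma cond_dfun_eq_stress_dist: "cond_dfun M X Y \<alpha> y = stress_dist C \<alpha> (dfun M Y y)"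
  by (simp add: cond_dfun_def stress_dist_def measure_stress_event measure_le_Int_stress_event)

lemma
  assumes "0 < t" "t < 1"
  shows stress_level_bounds: "unit_quantile (stress_dist C \<alpha>) t \<in> {0<..<1}"
    and le_stress_dist_stress_level: "t \<le> stress_dist C \<alpha> (unit_quantile (stress_dist C \<alpha>) t)"
    and le_stress_dist_iff_stress_level_le:
      "u \<in> {0..1} \<Longrightarrow> t \<le> stress_dist C \<alpha> u \<longleftrightarrow> unit_quantile (stress_dist C \<alpha>) t \<le> u"
  using unit_quantile_bounds le_G_unit_quantile le_G_iff_unit_quantile_le
    continuous_on_stress_dist[OF copula levels_unit stress_possible]
    mono_on_stress_dist[OF copula levels_unit stress_possible]
    stress_dist_0[OF copula levels_unit stress_possible]
    stress_dist_1[OF copula levels_unit stress_possible] assms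
  by blast+

lemma le_stress_level_if_LTD1:
  assumes "LTD1 C" "0 < t" "t < 1"
  shows "t \<le> unit_quantile (stress_dist C \<alpha>) t"
proof -
  let ?s = "unit_quantile (stress_dist C \<alpha>) t"
  have "t \<le> stress_dist C \<alpha> ?s" by (rule le_stress_dist_stress_level[OF assms(2,3)])
  also have "\<dots> \<le> ?s"
    using stress_level_bounds[OF assms(2,3)]
    by (intro stress_dist_le_self_if_LTD1[OF assms(1) levels_unit stress_possible]) auto
  finally show ?thesis .
qed

lemma VCoVaR_eq_VaR_stress_level:
  assumes "0 < t" "t < 1"
  shows "VCoVaR M X Y \<alpha> t = VaR M Y (unit_quantile (stress_dist C \<alpha>) t)"
proof -
  have "t \<le> cond_dfun M X Y \<alpha> y \<longleftrightarrow> unit_quantile (stress_dist C \<alpha>) t \<le> dfun M Y y" for y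
    unfolding cond_dfun_eq_stress_dist
    by (rule le_stress_dist_iff_stress_level_le[OF assms])
       (simp add: dfun_nonneg dfun_le_1[OF M_prob_space])
  then show ?thesis
    unfolding VCoVaR_def VaR_def gen_inv_def by simp
qed

lemma emeasure_stress_event_neq_0: "emeasure M (stress_event M X \<alpha>) \<noteq> 0"
  using measure_stress_event stress_possible by (simp add: emeasure_eq_measure)

lemma VCoVaR_eq_VaR_uniform_measure:
  "VCoVaR M X Y \<alpha> = VaR (uniform_measure M (stress_event M X \<alpha>)) Y"
proof -
  have "{\<omega> \<in> space M. Y \<omega> \<le> y} \<in> sets M" for y by measurable
  then have "cond_dfun M X Y \<alpha> = dfun (uniform_measure M (stress_event M X \<alpha>)) Y"
    using emeasure_stress_event_neq_0 by (simp add: fun_eq_iff cond_dfun_def dfun_def Int_commute)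
  then show ?thesis unfolding VCoVaR_def VaR_def by (simp only:)
qed

lemma set_integrable_VCoVaR:
  assumes "integrable M Y"
  shows "set_integrable lborel {0<..<1} (VCoVaR M X Y \<alpha>)"
proof -
  let ?M = "uniform_measure M (stress_event M X \<alpha>)"
  have "prob_space ?M"
    using emeasure_stress_event_neq_0 by (intro prob_space_uniform_measure) simp_all
  moreover have "integrable ?M Y"
    using emeasure_stress_event_neq_0 sets_stress_event assms
    by (intro integrable_uniform_measure) unfold_locales
  ultimately show ?thesis
    unfolding VCoVaR_eq_VaR_uniform_measure by (intro set_integrable_VaR) simp_all
qed

lemma Delta_VCoES_eq_integral:
  assumes "integrable M Y" "0 < \<beta>" "\<beta> < 1"
  shows "Delta_VCoES M X Y \<alpha> \<beta>
    = 1 / (1 - \<beta>) * (LINT t:{\<beta><..<1}|lborel. VCoVaR M X Y \<alpha> t - VaR M Y t)"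
proof -
  have "set_integrable lborel {\<beta><..<1} (VCoVaR M X Y \<alpha>)" "set_integrable lborel {\<beta><..<1} (VaR M Y)"
    using set_integrable_VCoVaR[OF assms(1)] set_integrable_VaR[OF M_prob_space Y_measurable assms(1)]
      assms(2)
    by (auto elim!: set_integrable_subset)
  then show ?thesis
    unfolding Delta_VCoES_def VCoES_def ES_def by (simp add: right_diff_distrib)
qed

end

lemma VaR_diff_le_if_disp_le:
  assumes "prob_space M1" "Y1 \<in> borel_measurable M1" "prob_space M2" "Y2 \<in> borel_measurable M2"
    and "disp_le M1 Y1 M2 Y2" "0 < t" "0 < s1" "s1 \<le> s2" "t \<le> s2" "s2 < 1"
  shows "VaR M1 Y1 s1 - VaR M1 Y1 t \<le> VaR M2 Y2 s2 - VaR M2 Y2 t"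
proof (cases "t \<le> s1")
  case True
  then have "VaR M1 Y1 s1 - VaR M1 Y1 t \<le> VaR M2 Y2 s1 - VaR M2 Y2 t"
    using assms(5-10) unfolding disp_le_def by simp
  moreover have "VaR M2 Y2 s1 \<le> VaR M2 Y2 s2" using VaR_mono assms(3,4,7,8,10) .
  ultimately show ?thesis by linarith
next
  case False
  then have "VaR M1 Y1 s1 \<le> VaR M1 Y1 t" using assms(9,10) by (intro VaR_mono[OF assms(1,2,7)]) auto
  moreover have "VaR M2 Y2 t \<le> VaR M2 Y2 s2" using VaR_mono assms(3,4,6,9,10) .
  ultimately show ?thesis by linarith
qed

lemma VCoVaR_minus_VaR_le:
  assumes m1: "copula_model M1 X1 Y1 C1 \<alpha>" and m2: "copula_model M2 X2 Y2 C2 \<alpha>"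
    and "LTD1 C1 \<or> LTD1 C2" and "disp_le M1 Y1 M2 Y2"
    and "\<forall>v\<in>{0<..1}. (v - C1 \<alpha> v) / (v - C2 \<alpha> v) \<ge> (1 - C1 \<alpha> 1) / (1 - C2 \<alpha> 1)"
    and "0 < t" "t < 1"
  shows "VCoVaR M1 X1 Y1 \<alpha> t - VaR M1 Y1 t \<le> VCoVaR M2 X2 Y2 \<alpha> t - VaR M2 Y2 t"
proof -
  interpret m1: copula_model M1 X1 Y1 C1 \<alpha> by (rule m1)
  interpret m2: copula_model M2 X2 Y2 C2 \<alpha> by (rule m2)
  define s1 where "s1 = unit_quantile (stress_dist C1 \<alpha>) t"
  define s2 where "s2 = unit_quantile (stress_dist C2 \<alpha>) t"
  have s1: "s1 \<in> {0<..<1}" and s2: "s2 \<in> {0<..<1}"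
    unfolding s1_def s2_def using m1.stress_level_bounds m2.stress_level_bounds assms(6,7) by auto
  have "t \<le> stress_dist C2 \<alpha> s2"
    unfolding s2_def by (rule m2.le_stress_dist_stress_level[OF assms(6,7)])
  also have "\<dots> \<le> stress_dist C1 \<alpha> s2"
    using s2 assms(5) m1.stress_possible m2.stress_possible
    by (intro stress_dist_le_if_ratio_ge[OF m1.copula m1.levels_unit]) auto
  finally have "s1 \<le> s2" unfolding s1_def using s2 by (intro unit_quantile_le) auto
  moreover have "t \<le> s2"
  proof (cases "LTD1 C1")
    case True
    then have "t \<le> s1" unfolding s1_def by (rule m1.le_stress_level_if_LTD1[OF _ assms(6,7)])
    then show ?thesis using \<open>s1 \<le> s2\<close> by simp
  next
    case False
    then show ?thesis
      using assms(3) m2.le_stress_level_if_LTD1[OF _ assms(6,7)] by (simp add: s2_def)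
  qed
  ultimately show ?thesis
    using VaR_diff_le_if_disp_le[OF m1.M_prob_space m1.Y_measurable m2.M_prob_space m2.Y_measurable
        assms(4,6)] s1 s2
    by (simp add: m1.VCoVaR_eq_VaR_stress_level[OF assms(6,7)]
        m2.VCoVaR_eq_VaR_stress_level[OF assms(6,7)] flip: s1_def s2_def)
qed

lemma tail_mean_mono:
  fixes f g :: "real \<Rightarrow> real"
  assumes "set_integrable lborel {0<..<1} f" "set_integrable lborel {0<..<1} g"
    and "\<And>t. t \<in> {0<..<1} \<Longrightarrow> f t \<le> g t" and "0 < \<beta>" "\<beta> < 1"
  shows "1 / (1 - \<beta>) * (LINT t:{\<beta><..<1}|lborel. f t)
    \<le> 1 / (1 - \<beta>) * (LINT t:{\<beta><..<1}|lborel. g t)"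
proof (rule mult_left_mono)
  show "(LINT t:{\<beta><..<1}|lborel. f t) \<le> (LINT t:{\<beta><..<1}|lborel. g t)"
    using assms by (intro set_integral_mono) (auto elim!: set_integrable_subset)
  show "0 \<le> 1 / (1 - \<beta>)" using assms(5) by simp
qed

theorem theorem4p5:
  fixes M1 :: "'a measure" and M2 :: "'b measure"
    and X1 :: "'a \<Rightarrow> real^'d" and Y1 :: "'a \<Rightarrow> real"
    and X2 :: "'b \<Rightarrow> real^'d" and Y2 :: "'b \<Rightarrow> real"
    and C1 C2 :: "real^'d \<Rightarrow> real \<Rightarrow> real"
    and \<alpha> :: "real^'d"
  assumes "prob_space M1" and "prob_space M2"
    and "X1 \<in> borel_measurable M1" and "Y1 \<in> borel_measurable M1"
    and "X2 \<in> borel_measurable M2" and "Y2 \<in> borel_measurable M2"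
    and "integrable M1 Y1" and "integrable M2 Y2"
    and "cont_marginals M1 X1 Y1" and "cont_marginals M2 X2 Y2"
    and "is_copula_of M1 X1 Y1 C1" and "is_copula_of M2 X2 Y2 C2"
    and "\<forall>i. \<alpha> $ i \<in> {0..<1}"
    and "C1 \<alpha> 1 < 1" and "C2 \<alpha> 1 < 1"
    and "LTD1 C1 \<or> LTD1 C2"
    and "disp_le M1 Y1 M2 Y2"
    and "\<forall>v\<in>{0<..1}. (v - C1 \<alpha> v) / (v - C2 \<alpha> v) \<ge> (1 - C1 \<alpha> 1) / (1 - C2 \<alpha> 1)"
  shows "\<forall>\<beta>\<in>{0<..<1}. Delta_VCoES M1 X1 Y1 \<alpha> \<beta> \<le> Delta_VCoES M2 X2 Y2 \<alpha> \<beta>"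
proof
  fix \<beta> :: real assume "\<beta> \<in> {0<..<1}"
  then have \<beta>: "0 < \<beta>" "\<beta> < 1" by simp_all
  have m1: "copula_model M1 X1 Y1 C1 \<alpha>" and m2: "copula_model M2 X2 Y2 C2 \<alpha>"
    using assms by (simp_all add: copula_model_def)
  interpret m1: copula_model M1 X1 Y1 C1 \<alpha> by (rule m1)
  interpret m2: copula_model M2 X2 Y2 C2 \<alpha> by (rule m2)
  have "set_integrable lborel {0<..<1} (\<lambda>t. VCoVaR M1 X1 Y1 \<alpha> t - VaR M1 Y1 t)"
    using m1.set_integrable_VCoVaR set_integrable_VaR assms(1,4,7) by auto
  moreover have "set_integrable lborel {0<..<1} (\<lambda>t. VCoVaR M2 X2 Y2 \<alpha> t - VaR M2 Y2 t)"
    using m2.set_integrable_VCoVaR set_integrable_VaR assms(2,6,8) by auto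
  moreover note VCoVaR_minus_VaR_le[OF m1 m2 assms(16-18)]
  ultimately show "Delta_VCoES M1 X1 Y1 \<alpha> \<beta> \<le> Delta_VCoES M2 X2 Y2 \<alpha> \<beta>"
    unfolding m1.Delta_VCoES_eq_integral[OF assms(7) \<beta>] m2.Delta_VCoES_eq_integral[OF assms(8) \<beta>]
    using \<beta> by (intro tail_mean_mono) auto
qed

end
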